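(* Let $\Gamma$ be a minimal subgroup of $\mathrm{Homeo}_+(S^1)$ admitting no $\Gamma$-invariant probability measure on $S^1$, and let $\theta\in\mathrm{Homeo}_+(S^1)$ be a periodic homeomorphism commuting with every element of $\Gamma$ such that for every $x\in S^1$ every closed interval contained in $[x,\theta(x)[$ is $\Gamma$-contractible (with $[x,\theta(x)[$ meaning the whole circle if $\theta=\mathrm{id}$). Let $\kappa$ be the period of $\theta$ and let $I_0\subset S^1$ be a closed interval such that $I_0,\theta(I_0),\dots,\theta^{\kappa-1}(I_0)$ are pairwise disjoint. Then there exists $h\in\Gamma$ such that $$\emptyset\neq\mathrm{Fix}(h)\subset \bigcup_{j=0}^{\kappa-1}\mathrm{Int}(\theta^j(I_0))\quad\text{and}\quad h\Big(S^1\setminus\bigcup_{j=0}^{\kappa-1}\mathrm{Int}(\theta^j(I_0))\Big)\subset\bigcup_{j=0}^{\kappa-1}\mathrm{Int}(\theta^j(I_0)).$$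
   Context: $\Gamma$ is minimal if every orbit is dense. A closed interval $I\subset S^1$ is $\Gamma$-contractible if there is a sequence $(g_n)$ in $\Gamma$ with the length of $g_n(I)$ tending to $0$. $[x,\theta(x)[$ denotes the half-open arc from $x$ to $\theta(x)$ in the positive direction. $\mathrm{Fix}(h)$ is the fixed point set of $h$. *)

theory Defs
  imports "HOL-Analysis.Analysis" "HOL-Probability.Probability"
begin

definition S1 :: "complex set" where
  "S1 = sphere 0 1"

definition cov :: "real \<Rightarrow> complex" where
  "cov t = cis (2 * pi * t)"

text \<open>Orientation-preserving homeomorphisms of S^1: maps admitting a continuous
  strictly increasing lift F with F(t+1) = F t + 1.  To make group elements
  canonical, they are required to be the identity off the circle.\<close>

definition homeo_plus :: "(complex \<Rightarrow> complex) \<Rightarrow> bool" where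
  "homeo_plus f \<longleftrightarrow>
     (\<exists>F::real \<Rightarrow> real. continuous_on UNIV F \<and> strict_mono F \<and>
        (\<forall>t. F (t + 1) = F t + 1) \<and> (\<forall>t. f (cov t) = cov (F t))) \<and>
     (\<forall>z. z \<notin> S1 \<longrightarrow> f z = z)"

definition homeo_plus_subgroup :: "(complex \<Rightarrow> complex) set \<Rightarrow> bool" where
  "homeo_plus_subgroup \<Gamma> \<longleftrightarrow>
     (\<forall>f\<in>\<Gamma>. homeo_plus f) \<and> id \<in> \<Gamma> \<and>
     (\<forall>f\<in>\<Gamma>. \<forall>g\<in>\<Gamma>. f \<circ> g \<in> \<Gamma>) \<and> (\<forall>f\<in>\<Gamma>. inv f \<in> \<Gamma>)"

definition minimal_action :: "(complex \<Rightarrow> complex) set \<Rightarrow> bool" where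
  "minimal_action \<Gamma> \<longleftrightarrow> (\<forall>x\<in>S1. closure {g x | g. g \<in> \<Gamma>} = S1)"

definition has_invariant_prob :: "(complex \<Rightarrow> complex) set \<Rightarrow> bool" where
  "has_invariant_prob \<Gamma> \<longleftrightarrow>
     (\<exists>M. prob_space M \<and> space M = S1 \<and> sets M = sets (restrict_space borel S1) \<and>
          (\<forall>g\<in>\<Gamma>. distr M M g = M))"

definition closed_arc :: "complex set \<Rightarrow> bool" where
  "closed_arc I \<longleftrightarrow> (\<exists>a b. a < b \<and> b < a + 1 \<and> I = cov ` {a..b})"

definition arc_len :: "complex set \<Rightarrow> real" where
  "arc_len A = measure lborel ({0..<1} \<inter> cov -` A)"

definition contractible :: "(complex \<Rightarrow> complex) set \<Rightarrow> complex set \<Rightarrow> bool" where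
  "contractible \<Gamma> I \<longleftrightarrow>
     (\<exists>gs::nat \<Rightarrow> complex \<Rightarrow> complex. (\<forall>n. gs n \<in> \<Gamma>) \<and>
        (\<lambda>n. arc_len (gs n ` I)) \<longlonglongrightarrow> 0)"

text \<open>Half-open arc [x,y[ in the positive direction (empty if x = y).\<close>
definition hoarc :: "complex \<Rightarrow> complex \<Rightarrow> complex set" where
  "hoarc x y = {z. \<exists>s d u. cov s = x \<and> cov (s + d) = y \<and> 0 \<le> d \<and> d < 1 \<and>
                          0 \<le> u \<and> u < d \<and> z = cov (s + u)}"

definition Fix :: "(complex \<Rightarrow> complex) \<Rightarrow> complex set" where
  "Fix h = {z \<in> S1. h z = z}"

definition periodic_homeo :: "(complex \<Rightarrow> complex) \<Rightarrow> bool" where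
  "periodic_homeo \<theta> \<longleftrightarrow> (\<exists>n>0. \<forall>z\<in>S1. (\<theta> ^^ n) z = z)"

definition period :: "(complex \<Rightarrow> complex) \<Rightarrow> nat" where
  "period \<theta> = (LEAST n. n > 0 \<and> (\<forall>z\<in>S1. (\<theta> ^^ n) z = z))"

end

theory Submission
  imports Defs
begin

text \<open>
  Write \<open>I\<^sub>0 = cov[a,b]\<close> and lift \<open>\<theta>\<close> to \<open>T\<close>.  Let \<open>c\<close> be the first point
  after \<open>b\<close> of the lifted \<open>\<theta>\<close>-orbit of \<open>a\<close>, so that \<open>cov[b,c]\<close> is the gap between \<open>I\<^sub>0\<close>
  and the next image of \<open>I\<^sub>0\<close>; every point outside the interiors of the images
  \<open>\<theta>\<^sup>j(I\<^sub>0)\<close> lies in some \<open>\<theta>\<^sup>j\<close>-image of this gap.  For \<open>s\<close> in the interior of \<open>I\<^sub>0\<close>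
  the arc \<open>L = cov[s,c]\<close> lies in \<open>[cov s, \<theta>(cov s)[\<close>, hence is contractible.  Using
  minimality, a contractible arc can be mapped into any open arc by an element of
  \<open>\<Gamma>\<close>; choose \<open>h \<in> \<Gamma>\<close> with \<open>h(L) \<subseteq> cov]s,b[\<close>.  Then \<open>h\<close> has a fixed point in \<open>L\<close>
  (intermediate value theorem on a lift), and since \<open>h\<close> commutes with \<open>\<theta>\<close> it maps
  every \<open>\<theta>\<^sup>j\<close>-image of the gap, hence the whole complement of the union of interiors,
  into that union; in particular it has no fixed point there.
\<close>

section \<open>The covering map\<close>

lemma cov_int: "cov (t + of_int k) = cov t"
proof -
  have "cov (t + of_int k) = cis (2*pi*t) * cis (2 * pi * of_int k)"
    unfolding cov_def cis_mult by (simp add: distrib_left)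
  then show ?thesis unfolding cov_def by simp
qed

lemma cov_eq: "cov x = cov y \<Longrightarrow> \<exists>k::int. x = y + of_int k"
proof -
  assume "cov x = cov y"
  then have "cis (2*pi*x - 2*pi*y) = 1" unfolding cov_def cis_divide[symmetric] by simp
  then have "cos (2*pi*x - 2*pi*y) = 1" by (metis cis.sel(1) one_complex.sel(1))
  then obtain n::int where "2*pi*x - 2*pi*y = real_of_int n * 2 * pi"
    unfolding cos_one_2pi_int by blast
  then have "(2*pi)*x = (2*pi)*(y + of_int n)" by (simp add: algebra_simps)
  then show ?thesis by auto
qed

lemma cov_S1: "cov t \<in> S1"
  unfolding cov_def S1_def by simp

lemma cov_surj: "z \<in> S1 \<Longrightarrow> \<exists>t. z = cov t"
proof -
  assume "z \<in> S1"
  then have "norm z = 1" unfolding S1_def by simp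
  then have "z \<noteq> 0" and "sgn z = z" by (auto simp: sgn_div_norm)
  then have "z = cis (Arg z)" using cis_Arg by metis
  then have "z = cov (Arg z / (2*pi))" unfolding cov_def by simp
  then show ?thesis by blast
qed

lemma cov_cont: "continuous_on A cov"
  unfolding cov_def by (intro continuous_intros)

text \<open>An open arc of length at most one is the complement of the closed
  complementary arc, hence open in the circle.\<close>

lemma cov_arc_split:
  assumes "x < y" "y \<le> x + 1"
  shows "cov ` {x<..<y} = S1 - cov ` {y..x+1}"
proof
  show "cov ` {x<..<y} \<subseteq> S1 - cov ` {y..x+1}"
  proof
    fix z assume "z \<in> cov ` {x<..<y}"
    then obtain s where s: "x < s" "s < y" "z = cov s" by auto
    have "z \<notin> cov ` {y..x+1}"
    proof
      assume "z \<in> cov ` {y..x+1}"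
      then obtain u where u: "y \<le> u" "u \<le> x+1" "cov s = cov u" using s by auto
      then obtain k::int where "s = u + of_int k" using cov_eq by blast
      then have "of_int k > (-1::real)" "of_int k < (0::real)" using s u by auto
      then show False by simp
    qed
    then show "z \<in> S1 - cov ` {y..x+1}" using s cov_S1 by auto
  qed
  show "S1 - cov ` {y..x+1} \<subseteq> cov ` {x<..<y}"
  proof
    fix z assume z: "z \<in> S1 - cov ` {y..x+1}"
    then obtain s0 where s0: "z = cov s0" using cov_surj by blast
    define s where "s = s0 - of_int (floor (s0 - x))"
    have zs: "z = cov s" unfolding s_def s0 using cov_int[of s0 "- floor (s0 - x)"] by simp
    have s: "x \<le> s" "s < x + 1" unfolding s_def by linarith+
    have "cov (x + 1) \<in> cov ` {y..x+1}" using assms by auto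
    then have "s \<noteq> x" using z zs cov_int[of x 1] by auto
    moreover have "\<not> (y \<le> s \<and> s \<le> x + 1)" using z zs by auto
    ultimately show "z \<in> cov ` {x<..<y}" using zs s by auto
  qed
qed

lemma cov_open_arc:
  assumes "x < y" "y \<le> x + 1"
  shows "openin (top_of_set S1) (cov ` {x<..<y})"
proof -
  have "closed (cov ` {y..x+1})"
    by (intro compact_imp_closed compact_continuous_image cov_cont) simp
  then have "openin (top_of_set S1) (S1 \<inter> - cov ` {y..x+1})"
    by (intro openin_open_Int) auto
  then show ?thesis using cov_arc_split[OF assms] by (simp add: Diff_eq)
qed

text \<open>The preimage in \<open>[0,1[\<close> of an arc of length \<open>l \<le> 1\<close> contains an interval
  of length \<open>l/2\<close>: either the reduced start point leaves room for it, or the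
  arc wraps around \<open>0\<close>.\<close>

lemma arc_preimage_contains_interval:
  assumes "0 \<le> l" "l \<le> 1"
  shows "\<exists>u. {u..<u + l/2} \<subseteq> {0..<1} \<inter> cov -` (cov ` {x..x+l})"
proof -
  define k where "k = floor x"
  define x' where "x' = x - of_int k"
  have x': "0 \<le> x'" "x' < 1" unfolding x'_def k_def by linarith+
  have shifted: "cov v \<in> cov ` {x..x+l}" if "v + of_int j \<in> {x..x+l}" for v j
    using that cov_int[of v j] by (metis image_eqI)
  show ?thesis
  proof (cases "x' + l/2 \<le> 1")
    case True
    have "{x'..<x'+l/2} \<subseteq> {0..<1} \<inter> cov -` (cov ` {x..x+l})"
    proof
      fix v assume v: "v \<in> {x'..<x'+l/2}"
      then have "v + of_int k \<in> {x..x+l}" using assms unfolding x'_def by auto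
      then have "cov v \<in> cov ` {x..x+l}" by (rule shifted)
      then show "v \<in> {0..<1} \<inter> cov -` (cov ` {x..x+l})" using v x' True by auto
    qed
    then show ?thesis by blast
  next
    case False
    have "{0..<l/2} \<subseteq> {0..<1} \<inter> cov -` (cov ` {x..x+l})"
    proof
      fix v assume v: "v \<in> {0..<l/2}"
      then have "v + of_int (k + 1) \<in> {x..x+l}" using x' False assms unfolding x'_def by auto
      then have "cov v \<in> cov ` {x..x+l}" by (rule shifted)
      then show "v \<in> {0..<1} \<inter> cov -` (cov ` {x..x+l})" using v assms by auto
    qed
    then show ?thesis by (metis add_0)
  qed
qed

text \<open>Consequently the normalized length of an arc controls its lifted length;
  this turns contractibility into a statement about lifts.\<close>

lemma arc_len_lb:
  assumes "x \<le> y" "y \<le> x + 1"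
  shows "(y - x) / 2 \<le> arc_len (cov ` {x..y})"
proof -
  define B where "B = {0..<1} \<inter> cov -` (cov ` {x..y})"
  have "closed (cov ` {x..y})"
    by (intro compact_imp_closed compact_continuous_image cov_cont) simp
  then have "closed (cov -` (cov ` {x..y}))"
    by (rule continuous_closed_vimage) (use cov_cont[of UNIV] in \<open>simp add: continuous_on_eq_continuous_at\<close>)
  then have B: "B \<in> fmeasurable lborel"
    unfolding B_def by (intro fmeasurable_Int_fmeasurable fmeasurableI) auto
  obtain u where u: "{u..<u + (y-x)/2} \<subseteq> B"
    using arc_preimage_contains_interval[of "y - x" x] assms unfolding B_def by auto
  have "measure lborel {u..<u + (y-x)/2} \<le> measure lborel B"
    by (rule measure_mono_fmeasurable[OF u _ B]) simp
  then show ?thesis using assms unfolding arc_len_def B_def by simp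
qed

section \<open>Lifts of orientation-preserving homeomorphisms\<close>

definition islift :: "(real \<Rightarrow> real) \<Rightarrow> bool" where
  "islift F \<longleftrightarrow> continuous_on UNIV F \<and> strict_mono F \<and> (\<forall>t. F (t + 1) = F t + 1)"

lemma homeo_lift: "homeo_plus f \<Longrightarrow> \<exists>F. islift F \<and> (\<forall>t. f (cov t) = cov (F t))"
  unfolding homeo_plus_def islift_def by blast

lemma lift_S1: "(\<forall>t. f (cov t) = cov (F t)) \<Longrightarrow> z \<in> S1 \<Longrightarrow> f z \<in> S1"
  using cov_surj cov_S1 by metis

lemma islift_cont: "islift F \<Longrightarrow> continuous_on A F"
  unfolding islift_def using continuous_on_subset by blast

lemma islift_mono: "islift F \<Longrightarrow> x < y \<Longrightarrow> F x < F y"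
  unfolding islift_def strict_mono_def by blast

lemma islift_le: "islift F \<Longrightarrow> x \<le> y \<Longrightarrow> F x \<le> F y"
  using islift_mono by (metis order_le_less)

lemma islift_plus1: "islift F \<Longrightarrow> F (x + 1) = F x + 1"
  unfolding islift_def by blast

lemma islift_int: "islift F \<Longrightarrow> F (t + of_int k) = F t + of_int k"
proof -
  assume "islift F"
  then have p: "F (t + of_nat n) = F t + of_nat n" for t n
    by (induction n arbitrary: t) (simp_all add: islift_plus1 flip: add.assoc)
  show ?thesis
  proof (cases "k \<ge> 0")
    case True then show ?thesis using p[of t "nat k"] by simp
  next
    case False
    then show ?thesis using p[of "t + of_int k" "nat (-k)"] by simp
  qed
qed

lemma islift_shift: "islift F \<Longrightarrow> islift (\<lambda>t. F t + of_int k)"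
  unfolding islift_def strict_mono_def by (auto intro: continuous_intros)

lemma islift_id: "islift id"
  unfolding islift_def by (auto simp: strict_mono_def)

lemma islift_comp: "islift F \<Longrightarrow> islift G \<Longrightarrow> islift (F \<circ> G)"
  unfolding islift_def
  by (auto intro: continuous_on_compose2[where t=UNIV] simp: strict_mono_def)

lemma islift_pow: "islift F \<Longrightarrow> islift (F ^^ n)"
  by (induction n) (auto simp: islift_id islift_comp)

lemma lift_pow_cov: "(\<forall>t. f (cov t) = cov (F t)) \<Longrightarrow> (f ^^ n) (cov t) = cov ((F ^^ n) t)"
  by (induction n arbitrary: t) auto

lemma islift_short: "islift F \<Longrightarrow> y \<le> x + 1 \<Longrightarrow> F y \<le> F x + 1"
  using islift_le islift_plus1 by metis

lemma islift_image: "islift F \<Longrightarrow> x \<le> y \<Longrightarrow> F ` {x..y} = {F x..F y}"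
proof
  assume l: "islift F" and xy: "x \<le> y"
  show "F ` {x..y} \<subseteq> {F x..F y}" using islift_le[OF l] by auto
  show "{F x..F y} \<subseteq> F ` {x..y}"
  proof
    fix s assume "s \<in> {F x..F y}"
    then obtain t where "x \<le> t" "t \<le> y" "F t = s"
      using IVT'[of F x s y] xy islift_cont[OF l] by auto
    then show "s \<in> F ` {x..y}" by auto
  qed
qed

section \<open>A periodic homeomorphism and the orbit of an arc\<close>

definition orbit_interior :: "(complex \<Rightarrow> complex) \<Rightarrow> nat \<Rightarrow> complex set \<Rightarrow> complex set" where
  "orbit_interior \<theta> K I = (\<Union>j<K. (top_of_set S1) interior_of ((\<theta> ^^ j) ` I))"

text \<open>All integer translates of the points \<open>T\<^sup>i x\<close>: the full preimage in the line of
  the \<open>\<theta>\<close>-orbit of \<open>cov x\<close>, when \<open>T\<close> lifts \<open>\<theta>\<close>.\<close>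

definition lifted_orbit :: "(real \<Rightarrow> real) \<Rightarrow> real \<Rightarrow> real set" where
  "lifted_orbit T x = {(T ^^ i) x + of_int k | i k. True}"

lemma lifted_orbit_iff: "e \<in> lifted_orbit T x \<longleftrightarrow> (\<exists>i (k::int). e = (T ^^ i) x + of_int k)"
  unfolding lifted_orbit_def by blast

lemma commute_pow:
  assumes "h \<circ> \<theta> = \<theta> \<circ> h"
  shows "h ((\<theta> ^^ j) w) = (\<theta> ^^ j) (h w)"
  using fun_cong[OF assms] by (induction j) simp_all

locale periodic_lift =
  fixes \<theta> :: "complex \<Rightarrow> complex" and T :: "real \<Rightarrow> real" and K :: nat
  assumes lift: "islift T" and lift_cov: "\<And>t. \<theta> (cov t) = cov (T t)"
    and K_pos: "0 < K" and periodic: "\<And>z. z \<in> S1 \<Longrightarrow> (\<theta> ^^ K) z = z"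
begin

lemma lift_pow: "islift (T ^^ j)"
  by (rule islift_pow[OF lift])

lemma pow_cov: "(\<theta> ^^ j) (cov t) = cov ((T ^^ j) t)"
  using lift_pow_cov lift_cov by blast

lemma pow_int: "(T ^^ j) (x + of_int k) = (T ^^ j) x + of_int k"
  by (rule islift_int[OF lift_pow])

lemma pow_mod:
  assumes "z \<in> S1"
  shows "(\<theta> ^^ j) z = (\<theta> ^^ (j mod K)) z"
proof -
  have "\<theta> z \<in> S1" if "z \<in> S1" for z using lift_S1[of \<theta> T] lift_cov that by blast
  then have S1_inv: "(\<theta> ^^ n) z \<in> S1" if "z \<in> S1" for n z using that by (induction n) auto
  have multiple: "(\<theta> ^^ (K * q)) z = z" for q
    by (induction q) (simp_all add: funpow_add periodic S1_inv assms)
  have "(\<theta> ^^ j) z = (\<theta> ^^ (j mod K)) ((\<theta> ^^ (K * (j div K))) z)"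
    by (metis comp_apply funpow_add mod_mult_div_eq)
  then show ?thesis using multiple by simp
qed

text \<open>Since \<open>\<theta>\<^sup>K\<close> is the identity, \<open>T\<^sup>K\<close> is a translation by an integer, so the
  lifted orbit is a finite union of translates of \<open>\<int>\<close> and meets every
  bounded interval in a finite set.\<close>

lemma lifted_orbit_mod: "\<exists>k::int. (T ^^ i) x = (T ^^ (i mod K)) x + of_int k"
  using cov_eq pow_cov pow_mod[OF cov_S1] by metis

lemma finite_orbit_window: "finite (lifted_orbit T x \<inter> {lo..hi})"
proof (rule finite_subset)
  let ?W = "\<Union>i<K. (\<lambda>k. (T ^^ i) x + of_int k) ` {\<lceil>lo - (T ^^ i) x\<rceil>..\<lfloor>hi - (T ^^ i) x\<rfloor>}"
  show "finite ?W" by auto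
  show "lifted_orbit T x \<inter> {lo..hi} \<subseteq> ?W"
  proof
    fix e assume "e \<in> lifted_orbit T x \<inter> {lo..hi}"
    then obtain i and k::int where e: "e = (T ^^ i) x + of_int k" "lo \<le> e" "e \<le> hi"
      unfolding lifted_orbit_def by auto
    obtain k' where "(T ^^ i) x = (T ^^ (i mod K)) x + of_int k'" using lifted_orbit_mod by blast
    then have e': "e = (T ^^ (i mod K)) x + of_int (k' + k)" using e by simp
    then have "k' + k \<in> {\<lceil>lo - (T ^^ (i mod K)) x\<rceil>..\<lfloor>hi - (T ^^ (i mod K)) x\<rfloor>}"
      using e by (simp add: ceiling_le_iff le_floor_iff)
    moreover have "i mod K < K" using K_pos by simp
    ultimately show "e \<in> ?W" using e' by blast
  qed
qed

lemma pow_arc: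
  assumes "a \<le> b"
  shows "(\<theta> ^^ j) ` cov ` {a..b} = cov ` {(T ^^ j) a..(T ^^ j) b}"
proof -
  have "(\<theta> ^^ j) ` cov ` {a..b} = cov ` ((T ^^ j) ` {a..b})" by (auto simp: image_image pow_cov)
  then show ?thesis using islift_image[OF lift_pow assms] by simp
qed

lemma in_orbit_interior:
  assumes "a < b" "b \<le> a + 1" "(T ^^ j) a < t" "t < (T ^^ j) b"
  shows "cov t \<in> orbit_interior \<theta> K (cov ` {a..b})"
proof -
  let ?A = "cov ` {(T ^^ j) a<..<(T ^^ j) b}"
  have "(T ^^ j) b \<le> (T ^^ j) a + 1" using islift_short[OF lift_pow] assms by blast
  then have open_arc: "openin (top_of_set S1) ?A"
    using cov_open_arc islift_mono[OF lift_pow assms(1)] by blast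
  have "(\<theta> ^^ j) ` cov ` {a..b} = (\<theta> ^^ (j mod K)) ` cov ` {a..b}"
    using pow_mod[OF cov_S1] by (auto simp: image_iff)
  moreover have "?A \<subseteq> (\<theta> ^^ j) ` cov ` {a..b}"
    unfolding pow_arc[OF less_imp_le[OF assms(1)]] by (rule image_mono) auto
  ultimately have "?A \<subseteq> (\<theta> ^^ (j mod K)) ` cov ` {a..b}" by simp
  then have "cov t \<in> (top_of_set S1) interior_of ((\<theta> ^^ (j mod K)) ` cov ` {a..b})"
    using interior_of_maximal[OF _ open_arc] assms(3,4) by (meson greaterThanLessThan_iff image_eqI subsetD)
  moreover have "j mod K < K" using K_pos by simp
  ultimately show ?thesis unfolding orbit_interior_def by blast
qed

end

lemma period_facts:
  assumes "periodic_homeo \<theta>"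
  shows "0 < period \<theta>" "\<And>z. z \<in> S1 \<Longrightarrow> (\<theta> ^^ period \<theta>) z = z"
proof -
  obtain n where "n > 0 \<and> (\<forall>z\<in>S1. (\<theta> ^^ n) z = z)"
    using assms unfolding periodic_homeo_def by blast
  then have "0 < period \<theta> \<and> (\<forall>z\<in>S1. (\<theta> ^^ period \<theta>) z = z)"
    unfolding period_def by (rule LeastI)
  then show "0 < period \<theta>" "\<And>z. z \<in> S1 \<Longrightarrow> (\<theta> ^^ period \<theta>) z = z" by auto
qed

section \<open>The gap following the arc\<close>

text \<open>For the arc \<open>I = cov[a,b]\<close>, let \<open>c\<close> be the first point of the lifted orbit of \<open>a\<close>
  after \<open>b\<close>: the arc \<open>cov[b,c]\<close> is the gap between \<open>I\<close> and the next image of \<open>I\<close>.\<close>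

context periodic_lift
begin

lemma next_orbit_point:
  assumes "a < b" "b < a + 1"
  obtains c where "b < c" "c \<le> a + 1" "c \<in> lifted_orbit T a"
    "\<And>e. e \<in> lifted_orbit T a \<Longrightarrow> b < e \<Longrightarrow> c \<le> e"
proof -
  define W where "W = lifted_orbit T a \<inter> {b..a+1} - {b}"
  have "finite W" unfolding W_def using finite_orbit_window by blast
  moreover have "a + 1 \<in> W"
    unfolding W_def lifted_orbit_def using assms by (auto intro: exI[of _ 0] exI[of _ 1])
  ultimately have min: "Min W \<in> W" "\<And>e. e \<in> W \<Longrightarrow> Min W \<le> e" by (auto intro: Min_in)
  have "b < Min W" "Min W \<le> a + 1" "Min W \<in> lifted_orbit T a"
    using min(1) \<open>a + 1 \<in> W\<close> min(2)[of "a + 1"] unfolding W_def by auto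
  moreover have "Min W \<le> e" if "e \<in> lifted_orbit T a" "b < e" for e
    using min(2)[of e] calculation(2) that unfolding W_def by force
  ultimately show thesis using that by blast
qed

text \<open>Every lifted point outside all the lifted open images of \<open>]a,b[\<close> is an image of a
  point of the gap: take the last lifted orbit point of \<open>b\<close> before it; the
  corresponding image of the gap must reach past it, otherwise the next image of
  \<open>b\<close> (lying after an image of \<open>c\<close>, an orbit point of \<open>a\<close>) would come later.\<close>

lemma gap_cover:
  assumes ab: "a < b" and bc: "b < c" and c: "c \<in> lifted_orbit T a"
    and outside: "\<And>i (k::int). \<not> ((T ^^ i) a + of_int k < t \<and> t < (T ^^ i) b + of_int k)"
  shows "\<exists>j (k::int) u. b \<le> u \<and> u \<le> c \<and> t = (T ^^ j) u + of_int k"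
proof -
  define E where "E = lifted_orbit T b \<inter> {t - 1..t}"
  have "b + of_int \<lfloor>t - b\<rfloor> \<in> lifted_orbit T b"
    unfolding lifted_orbit_iff by (rule exI[of _ 0]) auto
  moreover have "t - 1 \<le> b + of_int \<lfloor>t - b\<rfloor>" "b + of_int \<lfloor>t - b\<rfloor> \<le> t" by linarith+
  ultimately have "b + of_int \<lfloor>t - b\<rfloor> \<in> E" unfolding E_def by simp
  then have "E \<noteq> {}" by blast
  moreover have "finite E" unfolding E_def by (rule finite_orbit_window)
  ultimately obtain e where "e \<in> E" and e_max: "\<And>x. x \<in> E \<Longrightarrow> x \<le> e"
    using Max_in Max_ge by blast
  then obtain j and k::int where e: "e = (T ^^ j) b + of_int k" "t - 1 \<le> e" "e \<le> t"
    unfolding E_def lifted_orbit_def by auto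
  obtain i0 and k0::int where c0: "c = (T ^^ i0) a + of_int k0"
    using c unfolding lifted_orbit_def by blast
  have "t \<le> (T ^^ j) c + of_int k"
  proof (rule ccontr)
    assume "\<not> t \<le> (T ^^ j) c + of_int k"
    moreover have "(T ^^ j) c + of_int k = (T ^^ (j + i0)) a + of_int (k0 + k)"
      unfolding c0 by (simp add: pow_int funpow_add)
    ultimately have after: "(T ^^ (j + i0)) a + of_int (k0 + k) < t" by simp
    define e' where "e' = (T ^^ (j + i0)) b + of_int (k0 + k)"
    have "\<not> t < e'" using outside[of "j + i0" "k0 + k"] after unfolding e'_def by blast
    have "(T ^^ (j + i0)) a < (T ^^ (j + i0)) b" using islift_mono[OF lift_pow ab] .
    moreover have "(T ^^ j) b < (T ^^ j) c" using islift_mono[OF lift_pow bc] .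
    ultimately have "e < e'"
      using e(1) \<open>(T ^^ j) c + of_int k = _\<close> unfolding e'_def by linarith
    moreover have "e' \<in> lifted_orbit T b" unfolding e'_def lifted_orbit_def by blast
    ultimately have "e' \<in> E" using e \<open>\<not> t < e'\<close> unfolding E_def by auto
    then show False using e_max \<open>e < e'\<close> by fastforce
  qed
  then have "t - of_int k \<in> (T ^^ j) ` {b..c}" using e bc islift_image[OF lift_pow] by simp
  then obtain u where "u \<in> {b..c}" "t - of_int k = (T ^^ j) u" by blast
  then show ?thesis by (intro exI[of _ j] exI[of _ k] exI[of _ u]) auto
qed

lemma orbit_interior_complement:
  assumes ab: "a < b" "b \<le> a + 1" and bc: "b < c" and c: "c \<in> lifted_orbit T a"
    and z: "z \<in> S1" "z \<notin> orbit_interior \<theta> K (cov ` {a..b})"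
  shows "\<exists>j u. b \<le> u \<and> u \<le> c \<and> z = (\<theta> ^^ j) (cov u)"
proof -
  obtain t where t: "z = cov t" using cov_surj z(1) by blast
  have "\<not> ((T ^^ i) a + of_int k < t \<and> t < (T ^^ i) b + of_int k)" for i and k::int
  proof
    assume "(T ^^ i) a + of_int k < t \<and> t < (T ^^ i) b + of_int k"
    then have "(T ^^ i) a < t - of_int k" "t - of_int k < (T ^^ i) b" by linarith+
    then have "cov (t - of_int k) \<in> orbit_interior \<theta> K (cov ` {a..b})"
      by (rule in_orbit_interior[OF ab])
    then show False using z(2) t cov_int[of t "- k"] by simp
  qed
  then obtain j k u where "b \<le> u" "u \<le> c" "t = (T ^^ j) u + of_int k"
    using gap_cover[OF ab(1) bc c] by blast
  then show ?thesis using t cov_int pow_cov by metis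
qed

lemma complement_into_orbit_interior:
  assumes ab: "a < b" "b \<le> a + 1" and bc: "b < c" and c: "c \<in> lifted_orbit T a"
    and comm: "h \<circ> \<theta> = \<theta> \<circ> h" and H: "\<And>t. h (cov t) = cov (H t)"
    and gap: "\<And>u. b \<le> u \<Longrightarrow> u \<le> c \<Longrightarrow> a < H u \<and> H u < b"
    and z: "z \<in> S1" "z \<notin> orbit_interior \<theta> K (cov ` {a..b})"
  shows "h z \<in> orbit_interior \<theta> K (cov ` {a..b})"
proof -
  obtain j u where u: "b \<le> u" "u \<le> c" "z = (\<theta> ^^ j) (cov u)"
    using orbit_interior_complement[OF ab bc c z] by blast
  then have "h z = (\<theta> ^^ j) (h (cov u))" using commute_pow[OF comm] by simp
  also have "\<dots> = cov ((T ^^ j) (H u))" using H pow_cov by simp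
  finally have "h z = cov ((T ^^ j) (H u))" .
  moreover have "(T ^^ j) a < (T ^^ j) (H u)" "(T ^^ j) (H u) < (T ^^ j) b"
    using gap[OF u(1,2)] islift_mono[OF lift_pow] by auto
  ultimately show ?thesis using in_orbit_interior[OF ab] by simp
qed

text \<open>If \<open>\<theta>(I)\<close> is disjoint from \<open>I\<close>, then for \<open>s\<close> inside \<open>I\<close> the arc from \<open>s\<close> to the end
  of the gap lies in \<open>[cov s, \<theta>(cov s)[\<close>: the lift \<open>y \<in> [s, s+1[\<close> of \<open>\<theta>(cov s)\<close> cannot
  fall back into the lifted image of \<open>I\<close>, so it lies beyond an orbit point of \<open>a\<close>
  after \<open>b\<close>, hence beyond \<open>c\<close>.\<close>

lemma gap_in_half_open_arc:
  assumes ab: "a < b" and disj: "\<theta> ` cov ` {a..b} \<inter> cov ` {a..b} = {}"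
    and c_min: "\<And>e. e \<in> lifted_orbit T a \<Longrightarrow> b < e \<Longrightarrow> c \<le> e"
    and s: "a < s" "s < b"
  shows "cov ` {s..c} \<subseteq> hoarc (cov s) (\<theta> (cov s))"
proof -
  define n where "n = \<lfloor>T s - s\<rfloor>"
  define y where "y = T s - of_int n"
  have y: "s \<le> y" "y < s + 1" unfolding y_def n_def by linarith+
  have y_cov: "cov y = \<theta> (cov s)" using lift_cov cov_int[of "T s" "- n"] unfolding y_def by simp
  have "c < y"
  proof (cases "b < T a - of_int n")
    case True
    have "T a - of_int n \<in> lifted_orbit T a"
      unfolding lifted_orbit_iff by (rule exI[of _ 1], rule exI[of _ "- n"]) simp
    then have "c \<le> T a - of_int n" using c_min True by blast
    also have "\<dots> < y" unfolding y_def using islift_mono[OF lift s(1)] by simp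
    finally show ?thesis .
  next
    case False
    define p where "p = max a (T a - of_int n)"
    have "\<not> a \<le> T b - of_int n"
    proof
      assume "a \<le> T b - of_int n"
      then have p: "a \<le> p" "p \<le> b" "T a \<le> p + of_int n" "p + of_int n \<le> T b"
        using False ab islift_mono[OF lift ab] unfolding p_def by auto
      then have "cov p \<in> cov ` {a..b}" by auto
      moreover have "cov (p + of_int n) \<in> \<theta> ` cov ` {a..b}"
        using pow_arc[of a b 1] ab p by simp
      ultimately show False using disj cov_int by (metis disjoint_iff)
    qed
    then have "y < a" using islift_mono[OF lift s(2)] unfolding y_def by simp
    then show ?thesis using y s by linarith
  qed
  show ?thesis
  proof
    fix z assume "z \<in> cov ` {s..c}"
    then obtain u where u: "s \<le> u" "u \<le> c" "z = cov u" by auto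
    then have "z = cov (s + (u - s))" "cov (s + (y - s)) = \<theta> (cov s)" using y_cov by simp_all
    moreover have "0 \<le> y - s" "y - s < 1" "0 \<le> u - s" "u - s < y - s" using y u \<open>c < y\<close> by auto
    ultimately show "z \<in> hoarc (cov s) (\<theta> (cov s))" unfolding hoarc_def by blast
  qed
qed

lemma gap_arc_contractible:
  assumes contr: "\<forall>x\<in>S1. \<forall>J. closed_arc J \<and>
                   J \<subseteq> (if (\<forall>z\<in>S1. \<theta> z = z) then S1 else hoarc x (\<theta> x))
                   \<longrightarrow> contractible \<Gamma> J"
    and disj: "\<forall>i<K. \<forall>j<K. i \<noteq> j \<longrightarrow> (\<theta> ^^ i) ` cov ` {a..b} \<inter> (\<theta> ^^ j) ` cov ` {a..b} = {}"
    and ab: "a < b" and c_min: "\<And>e. e \<in> lifted_orbit T a \<Longrightarrow> b < e \<Longrightarrow> c \<le> e"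
    and s: "a < s" "s < b" "s < c" "c < s + 1"
  shows "contractible \<Gamma> (cov ` {s..c})"
proof -
  have arc: "closed_arc (cov ` {s..c})" unfolding closed_arc_def using s by auto
  show ?thesis
  proof (cases "\<forall>z\<in>S1. \<theta> z = z")
    case True
    then show ?thesis using contr cov_S1 arc by auto
  next
    case False
    then have "K \<noteq> 1" using periodic by (metis One_nat_def comp_id funpow.simps)
    then have "(\<theta> ^^ 1) ` cov ` {a..b} \<inter> (\<theta> ^^ 0) ` cov ` {a..b} = {}"
      using disj K_pos by (metis One_nat_def less_one nat_neq_iff zero_neq_one)
    then have "\<theta> ` cov ` {a..b} \<inter> cov ` {a..b} = {}" by simp
    then have "cov ` {s..c} \<subseteq> hoarc (cov s) (\<theta> (cov s))"
      using gap_in_half_open_arc ab c_min s(1,2) by blast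
    then show ?thesis using contr cov_S1 arc False by auto
  qed
qed

end

section \<open>Shrinking an arc into a prescribed open arc\<close>

lemma contractible_arc_lifts:
  assumes hp: "\<forall>g\<in>\<Gamma>. homeo_plus g" and con: "contractible \<Gamma> (cov ` {s..c})"
    and sc: "s \<le> c" "c \<le> s + 1"
  obtains gs G where "\<And>n. gs n \<in> \<Gamma>" "\<And>n. islift (G n)" "\<And>n t. gs n (cov t) = cov (G n t)"
    "(\<lambda>n. G n c - G n s) \<longlonglongrightarrow> 0"
proof -
  obtain gs where gs: "\<And>n. gs n \<in> \<Gamma>" and len: "(\<lambda>n. arc_len (gs n ` cov ` {s..c})) \<longlonglongrightarrow> 0"
    using con unfolding contractible_def by blast
  define G where "G n = (SOME G. islift G \<and> (\<forall>t. gs n (cov t) = cov (G t)))" for n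
  have G: "islift (G n) \<and> (\<forall>t. gs n (cov t) = cov (G n t))" for n
    using someI_ex[OF homeo_lift[OF hp[rule_format, OF gs]]] unfolding G_def by blast
  have bounds: "0 \<le> (G n c - G n s) / 2" "(G n c - G n s) / 2 \<le> arc_len (gs n ` cov ` {s..c})" for n
  proof -
    have "gs n ` cov ` {s..c} = cov ` (G n ` {s..c})" unfolding image_image using G[of n] by simp
    also have "\<dots> = cov ` {G n s..G n c}" using G[of n] islift_image[of "G n" s c] sc by simp
    finally have "gs n ` cov ` {s..c} = cov ` {G n s..G n c}" .
    moreover have "G n s \<le> G n c" using G[of n] sc(1) islift_le by blast
    moreover have "G n c \<le> G n s + 1" using G[of n] sc(2) islift_short by blast
    ultimately show "0 \<le> (G n c - G n s) / 2" "(G n c - G n s) / 2 \<le> arc_len (gs n ` cov ` {s..c})"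
      using arc_len_lb by auto
  qed
  have two_len: "(\<lambda>n. 2 * arc_len (gs n ` cov ` {s..c})) \<longlonglongrightarrow> 0"
    using tendsto_mult_right_zero[OF len] .
  have "(\<lambda>n. G n c - G n s) \<longlonglongrightarrow> 0"
    by (rule tendsto_sandwich[OF _ _ tendsto_const two_len]) (use bounds in \<open>auto simp: mult.commute\<close>)
  then show thesis using that gs G by blast
qed

lemma cluster_point_with_null:
  fixes x l :: "nat \<Rightarrow> real"
  assumes "\<And>n. x n \<in> {0..1}" and "l \<longlonglongrightarrow> 0"
  obtains r0 where "\<And>e. e > 0 \<Longrightarrow> \<exists>m. \<bar>x m - r0\<bar> < e \<and> \<bar>l m\<bar> < e"
proof -
  obtain r0 \<sigma> where \<sigma>: "strict_mono \<sigma>" "(x \<circ> \<sigma>) \<longlonglongrightarrow> r0"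
    using seq_compactE[OF compact_imp_seq_compact[OF compact_Icc]] assms(1) by metis
  have "\<exists>m. \<bar>x m - r0\<bar> < e \<and> \<bar>l m\<bar> < e" if "e > 0" for e
  proof -
    have "\<forall>\<^sub>F n in sequentially. dist ((x \<circ> \<sigma>) n) r0 < e \<and> dist ((l \<circ> \<sigma>) n) 0 < e"
      using tendstoD[OF \<sigma>(2) that] tendstoD[OF LIMSEQ_subseq_LIMSEQ[OF assms(2) \<sigma>(1)] that]
      by (rule eventually_conj)
    then obtain N where "dist ((x \<circ> \<sigma>) N) r0 < e \<and> dist ((l \<circ> \<sigma>) N) 0 < e"
      unfolding eventually_sequentially by blast
    then show ?thesis unfolding dist_real_def by auto
  qed
  then show thesis using that by blast
qed

lemma orbit_enters_arc:
  assumes hp: "\<forall>g\<in>\<Gamma>. homeo_plus g" and minimal: "minimal_action \<Gamma>"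
    and pr: "p < r" "r \<le> p + 1"
  obtains f F where "f \<in> \<Gamma>" "islift F" "\<And>t. f (cov t) = cov (F t)" "p < F r0" "F r0 < r"
proof -
  obtain W where W: "open W" "cov ` {p<..<r} = S1 \<inter> W"
    using cov_open_arc[OF pr] openin_open by blast
  have "cov ((p + r) / 2) \<in> W" using W(2) pr(1) by auto
  then have "W \<inter> closure {g (cov r0) | g. g \<in> \<Gamma>} \<noteq> {}"
    using minimal cov_S1 unfolding minimal_action_def by auto
  then obtain f where f: "f \<in> \<Gamma>" "f (cov r0) \<in> W"
    using open_Int_closure_eq_empty[OF W(1)] by blast
  obtain F where F: "islift F" "\<And>t. f (cov t) = cov (F t)" using homeo_lift hp f(1) by blast
  then have "f (cov r0) \<in> cov ` {p<..<r}" using W f(2) cov_S1 by auto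
  then obtain v where v: "p < v" "v < r" "cov (F r0) = cov v" using F(2) by auto
  then obtain k where "F r0 = v + of_int k" using cov_eq by blast
  moreover have "f (cov t) = cov (F t + of_int (- k))" for t using F(2) cov_int[of "F t" "- k"] by simp
  ultimately show thesis using that[OF f(1) islift_shift[OF F(1), of "- k"]] v by simp
qed

lemma lift_stays_in_interval:
  assumes "islift F" "p < F r0" "F r0 < r"
  obtains \<eta> where "\<eta> > 0" "\<And>x. \<bar>x - r0\<bar> < \<eta> \<Longrightarrow> p < F x \<and> F x < r"
proof -
  obtain \<eta> where "\<eta> > 0" "\<And>x. dist x r0 < \<eta> \<Longrightarrow> dist (F x) (F r0) < min (F r0 - p) (r - F r0)"
    using continuous_on_iff[THEN iffD1, OF islift_cont[OF assms(1), of UNIV], rule_format,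
        of r0 "min (F r0 - p) (r - F r0)"]
      assms(2,3) by auto
  moreover have "p < F x \<and> F x < r" if "dist x r0 < \<eta>" "\<bar>F x - F r0\<bar> < min (F r0 - p) (r - F r0)" for x
    using that by linarith
  ultimately show thesis using that[of \<eta>] unfolding dist_real_def by blast
qed

text \<open>Shrink it by \<open>g\<^sub>m\<close> to a tiny arc near an accumulation point
  \<open>cov r0\<close> of its images, then move that point into the target with an \<open>f\<close> from
  the group; \<open>f\<close> is continuous at \<open>r0\<close>, so the whole tiny arc follows.\<close>

lemma shrink_arc_into_arc:
  assumes hp: "\<forall>g\<in>\<Gamma>. homeo_plus g" and comp: "\<forall>f\<in>\<Gamma>. \<forall>g\<in>\<Gamma>. f \<circ> g \<in> \<Gamma>"
    and minimal: "minimal_action \<Gamma>" and con: "contractible \<Gamma> (cov ` {s..c})"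
    and sc: "s \<le> c" "c \<le> s + 1" and pr: "p < r" "r \<le> p + 1"
  obtains h H where "h \<in> \<Gamma>" "islift H" "\<And>t. h (cov t) = cov (H t)"
    "\<And>t. s \<le> t \<Longrightarrow> t \<le> c \<Longrightarrow> p < H t \<and> H t < r"
proof -
  obtain gs G where gs: "\<And>n. gs n \<in> \<Gamma>" and G: "\<And>n. islift (G n)" "\<And>n t. gs n (cov t) = cov (G n t)"
    and len: "(\<lambda>n. G n c - G n s) \<longlonglongrightarrow> 0"
    using contractible_arc_lifts[OF hp con sc] by blast
  define x where "x n = G n s - of_int \<lfloor>G n s\<rfloor>" for n
  have "x n \<in> {0..1}" for n unfolding x_def by (auto; linarith)
  then obtain r0 where r0: "\<And>e. e > 0 \<Longrightarrow> \<exists>m. \<bar>x m - r0\<bar> < e \<and> \<bar>G m c - G m s\<bar> < e"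
    using cluster_point_with_null[OF _ len] by blast
  obtain f F where f: "f \<in> \<Gamma>" and F: "islift F" "\<And>t. f (cov t) = cov (F t)" "p < F r0" "F r0 < r"
    using orbit_enters_arc[OF hp minimal pr] by blast
  obtain \<eta> where \<eta>: "\<eta> > 0" "\<And>x. \<bar>x - r0\<bar> < \<eta> \<Longrightarrow> p < F x \<and> F x < r"
    using lift_stays_in_interval[OF F(1,3,4)] by blast
  obtain m where m: "\<bar>x m - r0\<bar> < \<eta> / 2" "\<bar>G m c - G m s\<bar> < \<eta> / 2"
    using r0[OF half_gt_zero[OF \<eta>(1)]] by blast
  define fl where "fl = \<lfloor>G m s\<rfloor>"
  define H where "H = (\<lambda>v. F v + of_int (- fl)) \<circ> G m"
  show thesis
  proof (rule that)
    show "f \<circ> gs m \<in> \<Gamma>" using comp f gs by blast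
    show "islift H" unfolding H_def by (intro islift_comp islift_shift F(1) G(1))
    show "(f \<circ> gs m) (cov t) = cov (H t)" for t
      using F(2) G(2) cov_int[of "F (G m t)" "- fl"] unfolding H_def by simp
    show "p < H t \<and> H t < r" if "s \<le> t" "t \<le> c" for t
    proof -
      have "G m s \<le> G m t" "G m t \<le> G m c" using islift_le[OF G(1)] that by auto
      then have "\<bar>(G m t - of_int fl) - r0\<bar> < \<eta>" using m unfolding x_def fl_def by linarith
      then have "p < F (G m t + of_int (- fl)) \<and> F (G m t + of_int (- fl)) < r" using \<eta>(2) by simp
      then show ?thesis unfolding H_def using islift_int[OF F(1), of "G m t" "- fl"] by simp
    qed
  qed
qed

lemma interval_fixed_point:
  fixes H :: "real \<Rightarrow> real"
  assumes "continuous_on {s..c} H" "s \<le> c" "s \<le> H s" "H c \<le> c"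
  obtains t where "s \<le> t" "t \<le> c" "H t = t"
proof -
  have "continuous_on {s..c} (\<lambda>t. H t - t)" using assms(1) by (intro continuous_intros)
  then obtain t where "s \<le> t" "t \<le> c" "H t - t = 0"
    using IVT2'[of "\<lambda>t. H t - t" c 0 s] assms(2-4) by auto
  then show thesis using that by simp
qed

lemma (in periodic_lift) gap_into_arc_attracts:
  assumes ab: "a < b" "b \<le> a + 1" and c: "b < c" "c \<in> lifted_orbit T a" and s: "a < s" "s < b"
    and comm: "h \<circ> \<theta> = \<theta> \<circ> h" and H: "islift H" "\<And>t. h (cov t) = cov (H t)"
    and into: "\<And>t. s \<le> t \<Longrightarrow> t \<le> c \<Longrightarrow> s < H t \<and> H t < b"
  defines "U \<equiv> orbit_interior \<theta> K (cov ` {a..b})"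
  shows "Fix h \<noteq> {}" and "h ` (S1 - U) \<subseteq> U" and "Fix h \<subseteq> U"
proof -
  have "s \<le> c" using s(2) c(1) by linarith
  moreover have "s \<le> H s" "H c \<le> c" using into[of s] into[of c] s(2) c(1) by auto
  ultimately obtain t where "s \<le> t" "t \<le> c" "H t = t"
    using interval_fixed_point[OF islift_cont[OF H(1)]] by blast
  then have "cov t \<in> Fix h" using H(2) cov_S1 unfolding Fix_def by simp
  then show "Fix h \<noteq> {}" by blast
  have gap: "a < H u \<and> H u < b" if "b \<le> u" "u \<le> c" for u
    using into[of u] that s by force
  have out: "h z \<in> U" if "z \<in> S1" "z \<notin> U" for z
    using complement_into_orbit_interior[OF ab c comm H(2) gap that[unfolded U_def]]
    unfolding U_def .
  then show "h ` (S1 - U) \<subseteq> U" by blast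
  show "Fix h \<subseteq> U" using out unfolding Fix_def by force
qed

theorem corollary2p7:
  fixes \<Gamma> :: "(complex \<Rightarrow> complex) set"
    and \<theta> :: "complex \<Rightarrow> complex"
    and I0 :: "complex set"
  assumes subgrp: "homeo_plus_subgroup \<Gamma>"
    and minimal: "minimal_action \<Gamma>"
    and no_inv: "\<not> has_invariant_prob \<Gamma>"
    and theta_homeo: "homeo_plus \<theta>"
    and theta_per: "periodic_homeo \<theta>"
    and commute: "\<forall>g\<in>\<Gamma>. g \<circ> \<theta> = \<theta> \<circ> g"
    and contr: "\<forall>x\<in>S1. \<forall>J. closed_arc J \<and>
                   J \<subseteq> (if (\<forall>z\<in>S1. \<theta> z = z) then S1 else hoarc x (\<theta> x))
                   \<longrightarrow> contractible \<Gamma> J"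
    and I0: "closed_arc I0"
    and disj: "\<forall>i<period \<theta>. \<forall>j<period \<theta>. i \<noteq> j \<longrightarrow>
                 (\<theta> ^^ i) ` I0 \<inter> (\<theta> ^^ j) ` I0 = {}"
  shows "\<exists>h\<in>\<Gamma>.
           Fix h \<noteq> {} \<and>
           Fix h \<subseteq> (\<Union>j<period \<theta>. (top_of_set S1) interior_of ((\<theta> ^^ j) ` I0)) \<and>
           h ` (S1 - (\<Union>j<period \<theta>. (top_of_set S1) interior_of ((\<theta> ^^ j) ` I0)))
             \<subseteq> (\<Union>j<period \<theta>. (top_of_set S1) interior_of ((\<theta> ^^ j) ` I0))"
proof -
  obtain T where "islift T" "\<And>t. \<theta> (cov t) = cov (T t)" using homeo_lift[OF theta_homeo] by blast
  then interpret periodic_lift \<theta> T "period \<theta>" using period_facts[OF theta_per] by unfold_locales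
  obtain a b where ab: "a < b" "b < a + 1" and I0_arc: "I0 = cov ` {a..b}"
    using I0 unfolding closed_arc_def by blast
  obtain c where c: "b < c" "c \<le> a + 1" "c \<in> lifted_orbit T a"
    and c_min: "\<And>e. e \<in> lifted_orbit T a \<Longrightarrow> b < e \<Longrightarrow> c \<le> e"
    using next_orbit_point[OF ab] by blast
  define s where "s = (a + b) / 2"
  have s: "a < s" "s < b" "s < c" "c < s + 1" using ab c(1,2) unfolding s_def by (auto simp: field_simps)
  have hp: "\<forall>g\<in>\<Gamma>. homeo_plus g" and comp: "\<forall>f\<in>\<Gamma>. \<forall>g\<in>\<Gamma>. f \<circ> g \<in> \<Gamma>"
    using subgrp unfolding homeo_plus_subgroup_def by auto
  have "contractible \<Gamma> (cov ` {s..c})"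
    using gap_arc_contractible[OF contr disj[unfolded I0_arc] ab(1) c_min s] .
  moreover have "b \<le> s + 1" using s(1) ab(2) by linarith
  ultimately obtain h H where h: "h \<in> \<Gamma>" "islift H" "\<And>t. h (cov t) = cov (H t)"
    and into: "\<And>t. s \<le> t \<Longrightarrow> t \<le> c \<Longrightarrow> s < H t \<and> H t < b"
    using shrink_arc_into_arc[OF hp comp minimal _ less_imp_le[OF s(3)] less_imp_le[OF s(4)] s(2)]
    by blast
  have "h \<circ> \<theta> = \<theta> \<circ> h" using commute h(1) by blast
  note attracts = gap_into_arc_attracts[OF ab(1) less_imp_le[OF ab(2)] c(1,3) s(1,2) this h(2,3) into]
  show ?thesis
    unfolding orbit_interior_def[symmetric] I0_arc using h(1) attracts by blast
qed

end
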